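(* Let $n\ge 5$ and let $L$ be a Latin square of order $n$ with horizontal and vertical difference matrices $H=(h_{i,j})$ and $V=(v_{i,j})$. If rows $i$ and $i+1$ of $H$ are equal, then all entries of row $i$ of $V$ are equal. If columns $j$ and $j+1$ of $V$ are equal, then all entries of column $j$ of $H$ are equal. Moreover, $L$ is a row product if and only if every row of $H$ equals the first row of $H$, which holds if and only if every column of $V$ equals the first column of $V$.
   Context: Symbols are $[1,n]$. A Latin square of order $n$ is an $n\times n$ matrix $(m_{i,j})$ over $[1,n]$ with each symbol exactly once in every row and column. $H$ is the $n\times(n-1)$ matrix with $h_{i,j}\in[0,n-1]$, $h_{i,j}\equiv m_{i,j+1}-m_{i,j}\pmod n$; $V$ is the $(n-1)\times n$ matrix with $v_{i,j}\in[0,n-1]$, $v_{i,j}\equiv m_{i+1,j}-m_{i,j}\pmod n$. The difference row of a Latin row $(s_1,\dots,s_n)$ is $(h_1,\dots,h_{n-1})$ with $h_j\equiv s_{j+1}-s_j\pmod n$. A row product is a Latin square obtained by adding a constant mod $n$ to all entries of $\mathrm{prod}(d,d')$, the $n\times n$ matrix with $1$ in cell $(1,1)$ whose horizontal difference matrix has every row equal to a difference row $d$ and whose vertical difference matrix has every column equal to a difference row $d'$. *)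

theory Defs
  imports Main
begin

text \<open>Matrices are functions nat => nat => int, indexed 1-based by rows i and columns j;
  symbols are the integers 1..n.\<close>

definition latin_row :: "nat \<Rightarrow> (nat \<Rightarrow> int) \<Rightarrow> bool" where
  "latin_row n s \<longleftrightarrow> bij_betw s {1..n} {1..int n}"

definition latin_square :: "nat \<Rightarrow> (nat \<Rightarrow> nat \<Rightarrow> int) \<Rightarrow> bool" where
  "latin_square n M \<longleftrightarrow>
     (\<forall>i\<in>{1..n}. bij_betw (\<lambda>j. M i j) {1..n} {1..int n}) \<and>
     (\<forall>j\<in>{1..n}. bij_betw (\<lambda>i. M i j) {1..n} {1..int n})"

text \<open>Horizontal difference matrix (n x (n-1)) and vertical difference matrix ((n-1) x n),
  entries in [0,n-1].\<close>
definition hdiff :: "nat \<Rightarrow> (nat \<Rightarrow> nat \<Rightarrow> int) \<Rightarrow> nat \<Rightarrow> nat \<Rightarrow> int" where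
  "hdiff n M i j = (M i (j+1) - M i j) mod int n"

definition vdiff :: "nat \<Rightarrow> (nat \<Rightarrow> nat \<Rightarrow> int) \<Rightarrow> nat \<Rightarrow> nat \<Rightarrow> int" where
  "vdiff n M i j = (M (i+1) j - M i j) mod int n"

definition is_diff_row :: "nat \<Rightarrow> (nat \<Rightarrow> int) \<Rightarrow> bool" where
  "is_diff_row n d \<longleftrightarrow> (\<exists>s. latin_row n s \<and>
      (\<forall>j\<in>{1..n-1}. d j = (s (j+1) - s j) mod int n))"

definition is_prod :: "nat \<Rightarrow> (nat \<Rightarrow> int) \<Rightarrow> (nat \<Rightarrow> int) \<Rightarrow> (nat \<Rightarrow> nat \<Rightarrow> int) \<Rightarrow> bool" where
  "is_prod n d d' P \<longleftrightarrow>
     (\<forall>i\<in>{1..n}. \<forall>j\<in>{1..n}. P i j \<in> {1..int n}) \<and> P 1 1 = 1 \<and>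
     (\<forall>i\<in>{1..n}. \<forall>j\<in>{1..n-1}. hdiff n P i j = d j) \<and>
     (\<forall>i\<in>{1..n-1}. \<forall>j\<in>{1..n}. vdiff n P i j = d' i)"

text \<open>L is a row product: obtained from some prod(d,d') by adding a constant c mod n
  (representatives taken in [1,n]).\<close>
definition row_product :: "nat \<Rightarrow> (nat \<Rightarrow> nat \<Rightarrow> int) \<Rightarrow> bool" where
  "row_product n L \<longleftrightarrow> (\<exists>d d' P c. is_diff_row n d \<and> is_diff_row n d' \<and> is_prod n d d' P \<and>
      (\<forall>i\<in>{1..n}. \<forall>j\<in>{1..n}. L i j = (P i j + c - 1) mod int n + 1))"

end

theory Submission
  imports Defs
begin

text \<open>Both h(i+1,j) - h(i,j) and v(i,j+1) - v(i,j) are congruent mod n to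
  m(i+1,j+1) - m(i+1,j) - m(i,j+1) + m(i,j), and the entries of H and V are reduced mod n.
  Hence rows i and i+1 of H agree in column j exactly when columns j and j+1 of V agree in
  row i; chaining these equalities along a row or a column gives the first two claims and the
  equivalence of the last two conditions. Adding a constant mod n changes neither H nor V, so all
  rows of H of a row product coincide. Conversely, if they do, L is the shift by m(1,1) - 1 of
  prod(d, d'), where d is the first row of H and d' the first column of V; these are difference
  rows because the first row and column of L are Latin.\<close>

lemma hdiff_Suc_row_eq_iff_vdiff_Suc_col_eq:
  "hdiff n M (Suc i) j = hdiff n M i j \<longleftrightarrow> vdiff n M i (Suc j) = vdiff n M i j"
  unfolding hdiff_def vdiff_def mod_eq_dvd_iff by (simp add: algebra_simps)

lemma hdiff_shift:
  assumes "M' i j mod int n = (M i j + c) mod int n"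
    and "M' i (j+1) mod int n = (M i (j+1) + c) mod int n"
  shows "hdiff n M' i j = hdiff n M i j"
proof -
  have "hdiff n M' i j = (M' i (j+1) mod int n - M' i j mod int n) mod int n"
    by (simp add: hdiff_def mod_diff_eq)
  also have "\<dots> = ((M i (j+1) + c) - (M i j + c)) mod int n"
    by (simp only: assms mod_diff_eq)
  finally show ?thesis by (simp add: hdiff_def)
qed

lemma vdiff_shift:
  assumes "M' i j mod int n = (M i j + c) mod int n"
    and "M' (i+1) j mod int n = (M (i+1) j + c) mod int n"
  shows "vdiff n M' i j = vdiff n M i j"
proof -
  have "vdiff n M' i j = (M' (i+1) j mod int n - M' i j mod int n) mod int n"
    by (simp add: vdiff_def mod_diff_eq)
  also have "\<dots> = ((M (i+1) j + c) - (M i j + c)) mod int n"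
    by (simp only: assms mod_diff_eq)
  finally show ?thesis by (simp add: vdiff_def)
qed

lemma eq_first_if_consecutive_eq:
  assumes "\<forall>k\<in>{1..<m}. f (Suc k) = f k" and "j \<in> {1..m}"
  shows "f j = f (1::nat)"
proof -
  have "1 \<le> j" using assms(2) by simp
  then show ?thesis
  proof (induction j rule: dec_induct)
    case (step k)
    then show ?case using assms by simp
  qed simp
qed

lemma all_eq_first_iff_consecutive_eq:
  "(\<forall>k\<in>{1..m}. f k = f (1::nat)) \<longleftrightarrow> (\<forall>k\<in>{1..<m}. f (Suc k) = f k)"
proof
  assume all: "\<forall>k\<in>{1..m}. f k = f 1"
  show "\<forall>k\<in>{1..<m}. f (Suc k) = f k"
  proof
    fix k assume "k \<in> {1..<m}"
    then have "Suc k \<in> {1..m}" "k \<in> {1..m}" by auto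
    then have "f (Suc k) = f 1" "f k = f 1" using all by blast+
    then show "f (Suc k) = f k" by (rule trans_sym)
  qed
next
  assume "\<forall>k\<in>{1..<m}. f (Suc k) = f k"
  then show "\<forall>k\<in>{1..m}. f k = f 1" using eq_first_if_consecutive_eq by blast
qed

lemma vdiff_row_const_if_hdiff_rows_eq:
  assumes "\<forall>j\<in>{1..n-1}. hdiff n M i j = hdiff n M (i+1) j"
  shows "\<forall>j\<in>{1..n}. \<forall>j'\<in>{1..n}. vdiff n M i j = vdiff n M i j'"
proof (intro ballI)
  have "\<forall>k\<in>{1..<n}. vdiff n M i (Suc k) = vdiff n M i k"
    using assms by (auto simp flip: hdiff_Suc_row_eq_iff_vdiff_Suc_col_eq)
  note const = eq_first_if_consecutive_eq[OF this]
  fix j j' assume "j \<in> {1..n}" "j' \<in> {1..n}"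
  then show "vdiff n M i j = vdiff n M i j'" using const by metis
qed

lemma hdiff_col_const_if_vdiff_cols_eq:
  assumes "\<forall>i\<in>{1..n-1}. vdiff n M i j = vdiff n M i (j+1)"
  shows "\<forall>i\<in>{1..n}. \<forall>i'\<in>{1..n}. hdiff n M i j = hdiff n M i' j"
proof (intro ballI)
  have "\<forall>k\<in>{1..<n}. hdiff n M (Suc k) j = hdiff n M k j"
    using assms by (auto simp: hdiff_Suc_row_eq_iff_vdiff_Suc_col_eq)
  note const = eq_first_if_consecutive_eq[OF this]
  fix i i' assume "i \<in> {1..n}" "i' \<in> {1..n}"
  then show "hdiff n M i j = hdiff n M i' j" using const by metis
qed

lemma hdiff_rows_eq_first_iff_vdiff_cols_eq_first:
  "(\<forall>i\<in>{1..n}. \<forall>j\<in>{1..n-1}. hdiff n M i j = hdiff n M 1 j) \<longleftrightarrow>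
   (\<forall>i\<in>{1..n-1}. \<forall>j\<in>{1..n}. vdiff n M i j = vdiff n M i 1)"
proof -
  have range_eq: "{1..n-1} = {1..<n}" by auto
  have "(\<forall>i\<in>{1..n}. \<forall>j\<in>{1..<n}. hdiff n M i j = hdiff n M 1 j) \<longleftrightarrow>
      (\<forall>j\<in>{1..<n}. \<forall>i\<in>{1..n}. hdiff n M i j = hdiff n M 1 j)"
    by blast
  also have "\<dots> \<longleftrightarrow> (\<forall>j\<in>{1..<n}. \<forall>i\<in>{1..<n}. hdiff n M (Suc i) j = hdiff n M i j)"
    by (intro ball_cong refl all_eq_first_iff_consecutive_eq)
  also have "\<dots> \<longleftrightarrow> (\<forall>i\<in>{1..<n}. \<forall>j\<in>{1..<n}. vdiff n M i (Suc j) = vdiff n M i j)"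
    unfolding hdiff_Suc_row_eq_iff_vdiff_Suc_col_eq by blast
  also have "\<dots> \<longleftrightarrow> (\<forall>i\<in>{1..<n}. \<forall>j\<in>{1..n}. vdiff n M i j = vdiff n M i 1)"
    by (intro ball_cong refl all_eq_first_iff_consecutive_eq[symmetric])
  finally show ?thesis unfolding range_eq .
qed

lemma is_diff_row_hdiff_row:
  assumes "latin_square n L" and "i \<in> {1..n}"
  shows "is_diff_row n (hdiff n L i)"
  using assms unfolding is_diff_row_def latin_square_def latin_row_def hdiff_def by blast

lemma is_diff_row_vdiff_col:
  assumes "latin_square n L" and "j \<in> {1..n}"
  shows "is_diff_row n (\<lambda>i. vdiff n L i j)"
  using assms unfolding is_diff_row_def latin_square_def latin_row_def vdiff_def by blast

lemma row_product_imp_hdiff_rows_eq: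
  assumes "row_product n L"
  shows "\<forall>i\<in>{1..n}. \<forall>j\<in>{1..n-1}. hdiff n L i j = hdiff n L 1 j"
proof -
  obtain d d' P c where prod: "is_prod n d d' P"
    and L: "\<forall>i\<in>{1..n}. \<forall>j\<in>{1..n}. L i j = (P i j + c - 1) mod int n + 1"
    using assms unfolding row_product_def by blast
  have L_mod: "L i j mod int n = (P i j + c) mod int n" if "i \<in> {1..n}" "j \<in> {1..n}" for i j
    using L that by (simp add: mod_add_left_eq)
  have "hdiff n L i j = d j" if "i \<in> {1..n}" "j \<in> {1..n-1}" for i j
  proof -
    have "hdiff n L i j = hdiff n P i j"
      using that by (intro hdiff_shift[where c = c] L_mod) auto
    also have "\<dots> = d j" using prod that unfolding is_prod_def by blast
    finally show ?thesis .
  qed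
  then show ?thesis by (metis atLeastAtMost_iff le_refl order.trans)
qed

lemma row_product_if_hdiff_rows_eq:
  assumes "latin_square n L" and "n \<ge> 1"
    and H: "\<forall>i\<in>{1..n}. \<forall>j\<in>{1..n-1}. hdiff n L i j = hdiff n L 1 j"
  shows "row_product n L"
proof -
  have V: "\<forall>i\<in>{1..n-1}. \<forall>j\<in>{1..n}. vdiff n L i j = vdiff n L i 1"
    using H hdiff_rows_eq_first_iff_vdiff_cols_eq_first by blast
  have L_range: "L i j \<in> {1..int n}" if "i \<in> {1..n}" "j \<in> {1..n}" for i j
    using assms(1) that unfolding latin_square_def bij_betw_def by blast
  define P where "P i j = (L i j - L 1 1) mod int n + 1" for i j
  have P_mod: "P i j mod int n = (L i j + (1 - L 1 1)) mod int n" for i j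
    unfolding P_def by (simp add: mod_add_left_eq) (simp add: algebra_simps)
  have hdiff_P: "hdiff n P i j = hdiff n L i j" for i j
    by (rule hdiff_shift) (rule P_mod)+
  have vdiff_P: "vdiff n P i j = vdiff n L i j" for i j
    by (rule vdiff_shift) (rule P_mod)+
  have L_eq: "L i j = (P i j + (L 1 1 - 1) - 1) mod int n + 1" if "i \<in> {1..n}" "j \<in> {1..n}" for i j
  proof -
    have "(P i j + (L 1 1 - 1) - 1) mod int n + 1
        = ((L i j - L 1 1) mod int n + (L 1 1 - 1)) mod int n + 1"
      by (simp add: P_def add_diff_eq)
    also have "\<dots> = (L i j - 1) mod int n + 1"
      by (simp add: mod_add_left_eq)
    also have "\<dots> = L i j"
      using L_range[OF that] by simp
    finally show ?thesis by (rule sym)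
  qed
  have "(1::nat) \<in> {1..n}" using \<open>n \<ge> 1\<close> by simp
  show ?thesis
    unfolding row_product_def
  proof (intro exI conjI)
    show "is_diff_row n (hdiff n L 1)"
      using is_diff_row_hdiff_row assms(1) \<open>1 \<in> {1..n}\<close> .
    show "is_diff_row n (\<lambda>i. vdiff n L i 1)"
      using is_diff_row_vdiff_col assms(1) \<open>1 \<in> {1..n}\<close> .
    show "is_prod n (hdiff n L 1) (\<lambda>i. vdiff n L i 1) P"
      unfolding is_prod_def hdiff_P vdiff_P
    proof (intro conjI)
      show "\<forall>i\<in>{1..n}. \<forall>j\<in>{1..n}. P i j \<in> {1..int n}"
        using \<open>n \<ge> 1\<close> by (auto simp: P_def intro: zless_imp_add1_zle pos_mod_bound)
      show "P 1 1 = 1" by (simp add: P_def)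
    qed (fact H V)+
    show "\<forall>i\<in>{1..n}. \<forall>j\<in>{1..n}. L i j = (P i j + (L 1 1 - 1) - 1) mod int n + 1"
      using L_eq by blast
  qed
qed

theorem mainTheorem15:
  fixes n :: nat and L :: "nat \<Rightarrow> nat \<Rightarrow> int"
  assumes "n \<ge> 5" and "latin_square n L"
  shows "(\<forall>i. 1 \<le> i \<and> i + 1 \<le> n \<and> (\<forall>j\<in>{1..n-1}. hdiff n L i j = hdiff n L (i+1) j)
            \<longrightarrow> (\<forall>j\<in>{1..n}. \<forall>j'\<in>{1..n}. vdiff n L i j = vdiff n L i j'))
       \<and> (\<forall>j. 1 \<le> j \<and> j + 1 \<le> n \<and> (\<forall>i\<in>{1..n-1}. vdiff n L i j = vdiff n L i (j+1))
            \<longrightarrow> (\<forall>i\<in>{1..n}. \<forall>i'\<in>{1..n}. hdiff n L i j = hdiff n L i' j))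
       \<and> (row_product n L \<longleftrightarrow> (\<forall>i\<in>{1..n}. \<forall>j\<in>{1..n-1}. hdiff n L i j = hdiff n L 1 j))
       \<and> ((\<forall>i\<in>{1..n}. \<forall>j\<in>{1..n-1}. hdiff n L i j = hdiff n L 1 j) \<longleftrightarrow>
          (\<forall>i\<in>{1..n-1}. \<forall>j\<in>{1..n}. vdiff n L i j = vdiff n L i 1))"
proof (intro conjI allI impI)
  fix i assume "1 \<le> i \<and> i + 1 \<le> n \<and> (\<forall>j\<in>{1..n-1}. hdiff n L i j = hdiff n L (i+1) j)"
  then show "\<forall>j\<in>{1..n}. \<forall>j'\<in>{1..n}. vdiff n L i j = vdiff n L i j'"
    by (intro vdiff_row_const_if_hdiff_rows_eq) simp
next
  fix j assume "1 \<le> j \<and> j + 1 \<le> n \<and> (\<forall>i\<in>{1..n-1}. vdiff n L i j = vdiff n L i (j+1))"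
  then show "\<forall>i\<in>{1..n}. \<forall>i'\<in>{1..n}. hdiff n L i j = hdiff n L i' j"
    by (intro hdiff_col_const_if_vdiff_cols_eq) simp
next
  have "n \<ge> 1" using assms(1) by simp
  show "row_product n L \<longleftrightarrow> (\<forall>i\<in>{1..n}. \<forall>j\<in>{1..n-1}. hdiff n L i j = hdiff n L 1 j)"
    using row_product_imp_hdiff_rows_eq row_product_if_hdiff_rows_eq[OF assms(2) \<open>n \<ge> 1\<close>] ..
qed (rule hdiff_rows_eq_first_iff_vdiff_cols_eq_first)

end
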